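(* Let $D\subset\mathbb{R}^2$ be a simply connected domain, let $\mu\neq\theta$ be real constants, and let $v=(v^1,v^2),\,w=(w^1,w^2)\colon D\to\mathbb{R}^2$ be smooth maps satisfying on $D$ the system $$\begin{cases} w^1_{10}v^2_{01}-w^1_{01}v^2_{10}-w^2_{10}v^1_{01}+w^2_{01}v^1_{10}=0,\\ w^2_{10}v^2_{01}-w^2_{01}v^2_{10}+w^1_{10}v^1_{01}-w^1_{01}v^1_{10}=0,\end{cases}$$ and $\det(dv)+\det(dw)\neq 0$ on $D$. Let $$\varphi(t,\alpha)=M_1(t)v(\alpha)+M_2(t)w(\alpha),\quad M_1(t)=\begin{pmatrix}\cos\mu t&-\sin\mu t\\ \sin\mu t&\cos\mu t\end{pmatrix},\ M_2(t)=\begin{pmatrix}\cos\theta t&-\sin\theta t\\ \sin\theta t&\cos\theta t\end{pmatrix}.$$ Then $\det(d\varphi^t)=\det(dv)+\det(dw)$ for all $t$ (in particular it is independent of $t$ and nonzero), and there exists a scalar function $p(t,\alpha)$ with $(d\varphi^t)^T\varphi''+\nabla_\alpha p=0$ on $D$ for all $t$; i.e. $\varphi$ is a (local) solution of the Lagrangian incompressible Euler equations.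
   Context: Jet notation: for a function $f$ of $\alpha=(\alpha_1,\alpha_2)$, $f_{10}=\partial f/\partial\alpha_1$ and $f_{01}=\partial f/\partial\alpha_2$. For $\varphi(t,\alpha)=\varphi^t(\alpha)$, primes denote derivatives in $t$, $d\varphi^t$ is the Jacobian in $\alpha$, $\nabla_\alpha$ the gradient in $\alpha$. *)

theory Defs
  imports "HOL-Analysis.Analysis"
begin

definition pd10 :: "(real \<times> real \<Rightarrow> real) \<Rightarrow> real \<times> real \<Rightarrow> real" where
  "pd10 f x = frechet_derivative f (at x) (1, 0)"

definition pd01 :: "(real \<times> real \<Rightarrow> real) \<Rightarrow> real \<times> real \<Rightarrow> real" where
  "pd01 f x = frechet_derivative f (at x) (0, 1)"

fun Ck_on :: "nat \<Rightarrow> (real \<times> real) set \<Rightarrow> (real \<times> real \<Rightarrow> real) \<Rightarrow> bool" where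
  "Ck_on 0 D f = continuous_on D f"
| "Ck_on (Suc k) D f =
     ((\<forall>x\<in>D. f differentiable (at x)) \<and> Ck_on k D (pd10 f) \<and> Ck_on k D (pd01 f))"

definition smooth_on :: "(real \<times> real) set \<Rightarrow> (real \<times> real \<Rightarrow> real) \<Rightarrow> bool" where
  "smooth_on D f \<longleftrightarrow> (\<forall>k. Ck_on k D f)"

definition jdet :: "(real \<times> real \<Rightarrow> real) \<Rightarrow> (real \<times> real \<Rightarrow> real) \<Rightarrow> real \<times> real \<Rightarrow> real" where
  "jdet f g x = pd10 f x * pd01 g x - pd01 f x * pd10 g x"

definition phi1 :: "real \<Rightarrow> real \<Rightarrow> (real \<times> real \<Rightarrow> real) \<Rightarrow> (real \<times> real \<Rightarrow> real)
    \<Rightarrow> (real \<times> real \<Rightarrow> real) \<Rightarrow> (real \<times> real \<Rightarrow> real) \<Rightarrow> real \<Rightarrow> real \<times> real \<Rightarrow> real" where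
  "phi1 \<mu> \<theta> v1 v2 w1 w2 t a =
     cos (\<mu> * t) * v1 a - sin (\<mu> * t) * v2 a + cos (\<theta> * t) * w1 a - sin (\<theta> * t) * w2 a"

definition phi2 :: "real \<Rightarrow> real \<Rightarrow> (real \<times> real \<Rightarrow> real) \<Rightarrow> (real \<times> real \<Rightarrow> real)
    \<Rightarrow> (real \<times> real \<Rightarrow> real) \<Rightarrow> (real \<times> real \<Rightarrow> real) \<Rightarrow> real \<Rightarrow> real \<times> real \<Rightarrow> real" where
  "phi2 \<mu> \<theta> v1 v2 w1 w2 t a =
     sin (\<mu> * t) * v1 a + cos (\<mu> * t) * v2 a + sin (\<theta> * t) * w1 a + cos (\<theta> * t) * w2 a"

end

theory Submission
  imports Defs "HOL-Complex_Analysis.Riemann_Mapping"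
begin

text \<open>The two equations of the system say exactly that the real 1-forms
  \<open>v\<^sup>1 dw\<^sup>1 + v\<^sup>2 dw\<^sup>2\<close> and \<open>v\<^sup>1 dw\<^sup>2 - v\<^sup>2 dw\<^sup>1\<close> are closed. Expanding \<open>det (d\<phi>\<^sup>t)\<close> with
  \<open>cos\<^sup>2 + sin\<^sup>2 = 1\<close>, the mixed terms are multiples of these two closedness expressions, so
  \<open>det (d\<phi>\<^sup>t) = det (dv) + det (dw)\<close>. Since \<open>\<phi>'' = - \<mu>\<^sup>2 M\<^sub>1 v - \<theta>\<^sup>2 M\<^sub>2 w\<close>, the vector field
  \<open>(d\<phi>\<^sup>t)\<^sup>T \<phi>''\<close> is a gradient up to the terms involving \<open>(dw)\<^sup>T v\<close> and \<open>(dw)\<^sup>T J v\<close>, which are the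
  two closed forms above; on the simply connected domain \<open>D\<close> they have primitives, and these give the
  pressure explicitly.

  Exactness of closed \<open>C\<^sup>1\<close> forms on simply connected planar domains is obtained from the Riemann
  mapping theorem: on the plane and on the disc, integrating along the axis-parallel path from the
  centre gives a primitive, and closedness is preserved by pulling back along a biholomorphism.\<close>

section \<open>Partial derivatives\<close>

lemma pd_has_derivative:
  assumes "f differentiable (at x)"
  shows "(f has_derivative (\<lambda>h. pd10 f x * fst h + pd01 f x * snd h)) (at x)"
proof -
  have f': "(f has_derivative frechet_derivative f (at x)) (at x)"
    using assms frechet_derivative_works by blast
  have "frechet_derivative f (at x) h = pd10 f x * fst h + pd01 f x * snd h" for h
    using linear_cmul[OF has_derivative_linear[OF f'], of "fst h" "(1,0)"]
          linear_cmul[OF has_derivative_linear[OF f'], of "snd h" "(0,1)"]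
          linear_add[OF has_derivative_linear[OF f'], of "(fst h, 0)" "(0, snd h)"]
    by (cases h) (simp add: pd10_def pd01_def mult.commute)
  then have "frechet_derivative f (at x) = (\<lambda>h. pd10 f x * fst h + pd01 f x * snd h)"
    by (rule ext)
  with f' show ?thesis
    by simp
qed

lemma pd10_eq: "(f has_derivative L) (at x) \<Longrightarrow> pd10 f x = L (1, 0)"
  and pd01_eq: "(f has_derivative L) (at x) \<Longrightarrow> pd01 f x = L (0, 1)"
  by (simp_all add: pd10_def pd01_def frechet_derivative_at[symmetric])

lemma pd_add:
  assumes "f differentiable (at x)" "g differentiable (at x)"
  shows "pd10 (\<lambda>x. f x + g x) x = pd10 f x + pd10 g x" "pd01 (\<lambda>x. f x + g x) x = pd01 f x + pd01 g x"
  using has_derivative_add[OF pd_has_derivative[OF assms(1)] pd_has_derivative[OF assms(2)]]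
  by (simp_all add: pd10_eq pd01_eq)

lemma pd_diff:
  assumes "f differentiable (at x)" "g differentiable (at x)"
  shows "pd10 (\<lambda>x. f x - g x) x = pd10 f x - pd10 g x" "pd01 (\<lambda>x. f x - g x) x = pd01 f x - pd01 g x"
  using has_derivative_diff[OF pd_has_derivative[OF assms(1)] pd_has_derivative[OF assms(2)]]
  by (simp_all add: pd10_eq pd01_eq)

lemma pd_mult:
  assumes "f differentiable (at x)" "g differentiable (at x)"
  shows "pd10 (\<lambda>x. f x * g x) x = pd10 f x * g x + f x * pd10 g x"
    "pd01 (\<lambda>x. f x * g x) x = pd01 f x * g x + f x * pd01 g x"
  using has_derivative_mult[OF pd_has_derivative[OF assms(1)] pd_has_derivative[OF assms(2)]]
  by (simp_all add: pd10_eq pd01_eq)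

lemma pd_divide_const:
  assumes "f differentiable (at x)"
  shows "pd10 (\<lambda>x. f x / c) x = pd10 f x / c" "pd01 (\<lambda>x. f x / c) x = pd01 f x / c"
  using has_derivative_mult[OF pd_has_derivative[OF assms] has_derivative_const[of "inverse c"]]
  by (simp_all add: divide_inverse pd10_eq pd01_eq)

lemma pd_const [simp]: "pd10 (\<lambda>x. c) x = 0" "pd01 (\<lambda>x. c) x = 0"
  using pd10_eq[OF has_derivative_const] pd01_eq[OF has_derivative_const] by simp_all

lemma pd10_deriv:
  assumes "f differentiable (at (x, y))"
  shows "((\<lambda>s. f (s, y)) has_real_derivative pd10 f (x, y)) (at x)"
proof -
  have "((\<lambda>s. (s, y)) has_derivative (\<lambda>t. (t, 0))) (at x)"
    by (auto intro!: derivative_eq_intros)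
  from has_derivative_compose[OF this pd_has_derivative[OF assms]] show ?thesis
    by (simp add: has_field_derivative_def mult_commute_abs)
qed

lemma pd01_deriv:
  assumes "f differentiable (at (x, y))"
  shows "((\<lambda>t. f (x, t)) has_real_derivative pd01 f (x, y)) (at y)"
proof -
  have "((\<lambda>t. (x, t)) has_derivative (\<lambda>t. (0, t))) (at y)"
    by (auto intro!: derivative_eq_intros)
  from has_derivative_compose[OF this pd_has_derivative[OF assms]] show ?thesis
    by (simp add: has_field_derivative_def mult_commute_abs)
qed

lemma second_difference_pd01_pd10:
  assumes "h > 0" and sq: "\<And>s t. x \<le> s \<Longrightarrow> s \<le> x + h \<Longrightarrow> y \<le> t \<Longrightarrow> t \<le> y + h \<Longrightarrow> (s, t) \<in> D"
    and df: "\<And>z. z \<in> D \<Longrightarrow> f differentiable (at z)"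
    and d10: "\<And>z. z \<in> D \<Longrightarrow> pd10 f differentiable (at z)"
  obtains \<xi> \<eta> where "x < \<xi>" "\<xi> < x + h" "y < \<eta>" "\<eta> < y + h"
    "f (x + h, y + h) - f (x + h, y) - f (x, y + h) + f (x, y) = h * h * pd01 (pd10 f) (\<xi>, \<eta>)"
proof -
  have "\<exists>\<xi>. x < \<xi> \<and> \<xi> < x + h \<and> (f (x + h, y + h) - f (x + h, y)) - (f (x, y + h) - f (x, y))
      = (x + h - x) * (pd10 f (\<xi>, y + h) - pd10 f (\<xi>, y))"
    using \<open>h > 0\<close> sq by (intro MVT2) (auto intro!: DERIV_diff pd10_deriv df)
  then obtain \<xi> where \<xi>: "x < \<xi>" "\<xi> < x + h" and e1: "(f (x + h, y + h) - f (x + h, y)) - (f (x, y + h) - f (x, y))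
      = h * (pd10 f (\<xi>, y + h) - pd10 f (\<xi>, y))"
    by auto
  have "\<exists>\<eta>. y < \<eta> \<and> \<eta> < y + h \<and> pd10 f (\<xi>, y + h) - pd10 f (\<xi>, y) = (y + h - y) * pd01 (pd10 f) (\<xi>, \<eta>)"
    using \<open>h > 0\<close> \<xi> sq by (intro MVT2[where f="\<lambda>t. pd10 f (\<xi>, t)"]) (auto intro!: pd01_deriv d10)
  then obtain \<eta> where "y < \<eta>" "\<eta> < y + h" "pd10 f (\<xi>, y + h) - pd10 f (\<xi>, y) = h * pd01 (pd10 f) (\<xi>, \<eta>)"
    by auto
  with \<xi> e1 show ?thesis
    by (intro that[of \<xi> \<eta>]) (simp_all add: algebra_simps)
qed

lemma second_difference_pd10_pd01:
  assumes "h > 0" and sq: "\<And>s t. x \<le> s \<Longrightarrow> s \<le> x + h \<Longrightarrow> y \<le> t \<Longrightarrow> t \<le> y + h \<Longrightarrow> (s, t) \<in> D"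
    and df: "\<And>z. z \<in> D \<Longrightarrow> f differentiable (at z)"
    and d01: "\<And>z. z \<in> D \<Longrightarrow> pd01 f differentiable (at z)"
  obtains \<xi> \<eta> where "x < \<xi>" "\<xi> < x + h" "y < \<eta>" "\<eta> < y + h"
    "f (x + h, y + h) - f (x + h, y) - f (x, y + h) + f (x, y) = h * h * pd10 (pd01 f) (\<xi>, \<eta>)"
proof -
  have "\<exists>\<eta>. y < \<eta> \<and> \<eta> < y + h \<and> (f (x + h, y + h) - f (x, y + h)) - (f (x + h, y) - f (x, y))
      = (y + h - y) * (pd01 f (x + h, \<eta>) - pd01 f (x, \<eta>))"
    using \<open>h > 0\<close> sq by (intro MVT2) (auto intro!: DERIV_diff pd01_deriv df)
  then obtain \<eta> where \<eta>: "y < \<eta>" "\<eta> < y + h" and e1: "(f (x + h, y + h) - f (x, y + h)) - (f (x + h, y) - f (x, y))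
      = h * (pd01 f (x + h, \<eta>) - pd01 f (x, \<eta>))"
    by auto
  have "\<exists>\<xi>. x < \<xi> \<and> \<xi> < x + h \<and> pd01 f (x + h, \<eta>) - pd01 f (x, \<eta>) = (x + h - x) * pd10 (pd01 f) (\<xi>, \<eta>)"
    using \<open>h > 0\<close> \<eta> sq by (intro MVT2[where f="\<lambda>s. pd01 f (s, \<eta>)"]) (auto intro!: pd10_deriv d01)
  then obtain \<xi> where "x < \<xi>" "\<xi> < x + h" "pd01 f (x + h, \<eta>) - pd01 f (x, \<eta>) = h * pd10 (pd01 f) (\<xi>, \<eta>)"
    by auto
  with \<eta> e1 show ?thesis
    by (intro that[of \<xi> \<eta>]) (simp_all add: algebra_simps)
qed

lemma pd01_pd10_eq:
  assumes "open D" "z \<in> D"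
    and df: "\<And>z. z \<in> D \<Longrightarrow> f differentiable (at z)"
    and d10: "\<And>z. z \<in> D \<Longrightarrow> pd10 f differentiable (at z)"
    and d01: "\<And>z. z \<in> D \<Longrightarrow> pd01 f differentiable (at z)"
    and c10: "continuous_on D (pd01 (pd10 f))" and c01: "continuous_on D (pd10 (pd01 f))"
  shows "pd01 (pd10 f) z = pd10 (pd01 f) z"
proof (rule ccontr)
  obtain x y where z: "z = (x, y)" by fastforce
  define \<epsilon> where "\<epsilon> = \<bar>pd01 (pd10 f) z - pd10 (pd01 f) z\<bar> / 2"
  assume "pd01 (pd10 f) z \<noteq> pd10 (pd01 f) z"
  then have "\<epsilon> > 0" by (simp add: \<epsilon>_def)
  obtain d1 where "d1 > 0" and d1: "\<And>w. w \<in> D \<Longrightarrow> dist w z < d1 \<Longrightarrow> dist (pd01 (pd10 f) w) (pd01 (pd10 f) z) < \<epsilon>"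
    using c10 \<open>z \<in> D\<close> \<open>\<epsilon> > 0\<close> unfolding continuous_on_iff by blast
  obtain d2 where "d2 > 0" and d2: "\<And>w. w \<in> D \<Longrightarrow> dist w z < d2 \<Longrightarrow> dist (pd10 (pd01 f) w) (pd10 (pd01 f) z) < \<epsilon>"
    using c01 \<open>z \<in> D\<close> \<open>\<epsilon> > 0\<close> unfolding continuous_on_iff by blast
  obtain r where "r > 0" and r: "ball z r \<subseteq> D"
    using \<open>open D\<close> \<open>z \<in> D\<close> open_contains_ball by blast
  define h where "h = min (min d1 d2) r / 3"
  have "h > 0" using \<open>d1 > 0\<close> \<open>d2 > 0\<close> \<open>r > 0\<close> by (simp add: h_def)
  have sq: "(s, t) \<in> D \<and> dist (s, t) z < d1 \<and> dist (s, t) z < d2"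
    if "x \<le> s" "s \<le> x + h" "y \<le> t" "t \<le> y + h" for s t
  proof -
    have "dist (s, t) z \<le> \<bar>s - x\<bar> + \<bar>t - y\<bar>"
      using norm_Pair_le[of "s - x" "t - y"] by (simp add: z dist_norm)
    also have "\<dots> < min (min d1 d2) r"
      using that \<open>h > 0\<close> unfolding h_def by linarith
    finally show ?thesis
      using r by (auto simp: dist_commute)
  qed
  obtain \<xi> \<eta> where "x < \<xi>" "\<xi> < x + h" "y < \<eta>" "\<eta> < y + h"
    and D1: "f (x + h, y + h) - f (x + h, y) - f (x, y + h) + f (x, y) = h * h * pd01 (pd10 f) (\<xi>, \<eta>)"
    using second_difference_pd01_pd10[OF \<open>h > 0\<close> _ df d10] sq by metis
  then have A: "dist (pd01 (pd10 f) (\<xi>, \<eta>)) (pd01 (pd10 f) z) < \<epsilon>"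
    using sq[of \<xi> \<eta>] by (intro d1) auto
  obtain \<xi>' \<eta>' where "x < \<xi>'" "\<xi>' < x + h" "y < \<eta>'" "\<eta>' < y + h"
    and D2: "f (x + h, y + h) - f (x + h, y) - f (x, y + h) + f (x, y) = h * h * pd10 (pd01 f) (\<xi>', \<eta>')"
    using second_difference_pd10_pd01[OF \<open>h > 0\<close> _ df d01] sq by metis
  then have B: "dist (pd10 (pd01 f) (\<xi>', \<eta>')) (pd10 (pd01 f) z) < \<epsilon>"
    using sq[of \<xi>' \<eta>'] by (intro d2) auto
  have "pd01 (pd10 f) (\<xi>, \<eta>) = pd10 (pd01 f) (\<xi>', \<eta>')"
    using D1 D2 \<open>h > 0\<close> by simp
  with A B have "dist (pd01 (pd10 f) z) (pd10 (pd01 f) z) < 2 * \<epsilon>"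
    using dist_triangle3[of "pd01 (pd10 f) z" "pd10 (pd01 f) z" "pd10 (pd01 f) (\<xi>', \<eta>')"] by simp
  then show False
    by (simp add: \<epsilon>_def dist_real_def)
qed

section \<open>Smoothness classes\<close>

lemma Ck_on_Suc_imp_Ck_on: "Ck_on (Suc k) D f \<Longrightarrow> Ck_on k D f"
proof (induction k arbitrary: f)
  case 0
  then show ?case
    by (simp add: continuous_at_imp_continuous_on differentiable_imp_continuous_within)
next
  case (Suc k)
  show ?case
    using Suc.prems Suc.IH[of "pd10 f"] Suc.IH[of "pd01 f"] by simp
qed

lemma Ck_on_Suc_0_add_diff_mult:
  assumes "Ck_on (Suc 0) D f" "Ck_on (Suc 0) D g"
  shows "Ck_on (Suc 0) D (\<lambda>x. f x + g x)" "Ck_on (Suc 0) D (\<lambda>x. f x - g x)"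
    "Ck_on (Suc 0) D (\<lambda>x. f x * g x)"
proof -
  have df: "\<And>x. x \<in> D \<Longrightarrow> f differentiable (at x)" and dg: "\<And>x. x \<in> D \<Longrightarrow> g differentiable (at x)"
    and cont: "continuous_on D f" "continuous_on D g"
      "continuous_on D (pd10 f)" "continuous_on D (pd01 f)" "continuous_on D (pd10 g)" "continuous_on D (pd01 g)"
    using assms Ck_on_Suc_imp_Ck_on[OF assms(1)] Ck_on_Suc_imp_Ck_on[OF assms(2)] by auto
  show "Ck_on (Suc 0) D (\<lambda>x. f x + g x)" "Ck_on (Suc 0) D (\<lambda>x. f x - g x)" "Ck_on (Suc 0) D (\<lambda>x. f x * g x)"
    using df dg cont
    by (auto simp: pd_add pd_diff pd_mult cong: continuous_on_cong intro!: continuous_intros)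
qed

lemma smooth_on_imp_Ck_on: "smooth_on D f \<Longrightarrow> Ck_on k D f"
  by (simp add: smooth_on_def)

lemma smooth_on_pd:
  assumes "smooth_on D f"
  shows "smooth_on D (pd10 f)" "smooth_on D (pd01 f)"
  using assms unfolding smooth_on_def by (metis Ck_on.simps(2))+

lemma smooth_on_pd01_pd10_eq:
  assumes "open D" "smooth_on D f" "a \<in> D"
  shows "pd01 (pd10 f) a = pd10 (pd01 f) a"
proof -
  have "Ck_on 2 D f"
    using assms(2) by (rule smooth_on_imp_Ck_on)
  then show ?thesis
    by (intro pd01_pd10_eq[OF assms(1,3)]) (auto simp: numeral_2_eq_2)
qed

section \<open>Oriented integrals depending on a parameter\<close>

lemma interval_integral_has_real_derivative:
  fixes f :: "real \<Rightarrow> real"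
  assumes "continuous_on {a..b} f" "a \<le> c" "c \<le> b" "a < x" "x < b"
  shows "((\<lambda>u. LBINT y=c..u. f y) has_real_derivative f x) (at x)"
proof -
  have "((\<lambda>u. LBINT y=c..u. f y) has_vector_derivative f x) (at x within {a..b})"
    using assms by (intro interval_integral_FTC2) auto
  then show ?thesis
    using assms by (simp add: at_within_Icc_at has_real_derivative_iff_has_vector_derivative)
qed

lemma interval_integral_has_real_derivative_open:
  fixes f :: "real \<Rightarrow> real"
  assumes "open S" "closed_segment c x \<subseteq> S" "continuous_on S f"
  shows "((\<lambda>u. LBINT y=c..u. f y) has_real_derivative f x) (at x)"
proof -
  obtain e where "e > 0" and e: "(\<Union>z\<in>closed_segment c x. ball z e) \<subseteq> S"
    using compact_subset_open_imp_ball_epsilon_subset[OF compact_segment assms(1,2)] by blast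
  have "{min c x - e/2..max c x + e/2} \<subseteq> S"
  proof
    fix t assume t: "t \<in> {min c x - e/2..max c x + e/2}"
    define z where "z = max (min c x) (min (max c x) t)"
    have "z \<in> closed_segment c x"
      by (auto simp: z_def closed_segment_eq_real_ivl)
    moreover have "dist t z < e"
      using t \<open>e > 0\<close> unfolding z_def dist_real_def by (simp add: abs_if min_def max_def)
    ultimately show "t \<in> S"
      using e by (force simp: dist_commute)
  qed
  then show ?thesis
    using \<open>e > 0\<close>
    by (intro interval_integral_has_real_derivative[where a="min c x - e/2" and b="max c x + e/2"]
        continuous_on_subset[OF assms(3)]) auto
qed

lemma interval_integral_leibniz:
  fixes f fx :: "real \<Rightarrow> real \<Rightarrow> real"
  assumes fx: "\<And>s t. s \<in> X \<Longrightarrow> t \<in> {min a b..max a b} \<Longrightarrow>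
                 ((\<lambda>s. f s t) has_real_derivative fx s t) (at s within X)"
    and cont_f: "\<And>s. s \<in> X \<Longrightarrow> continuous_on {min a b..max a b} (f s)"
    and cont_fx: "continuous_on (X \<times> {min a b..max a b}) (\<lambda>(s, t). fx s t)"
    and "x \<in> X" "convex X"
  shows "((\<lambda>s. LBINT t=a..b. f s t) has_real_derivative (LBINT t=a..b. fx x t)) (at x within X)"
proof -
  define \<sigma> :: real where "\<sigma> = (if a \<le> b then 1 else -1)"
  have LBINT_eq: "(LBINT t=a..b. g t) = \<sigma> * integral {min a b..max a b} g"
    if "continuous_on {min a b..max a b} g" for g :: "real \<Rightarrow> real"
  proof (cases "a \<le> b")
    case True
    with that show ?thesis
      by (simp add: \<sigma>_def interval_integral_eq_integral borel_integrable_atLeastAtMost' min_def max_def)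
  next
    case False
    with that show ?thesis
      by (subst interval_integral_endpoints_reverse)
         (simp add: \<sigma>_def interval_integral_eq_integral borel_integrable_atLeastAtMost' min_def max_def)
  qed
  have cont_fx_x: "continuous_on {min a b..max a b} (fx x)"
    by (rule continuous_on_compose2[OF cont_fx, where f="\<lambda>t. (x, t)", simplified])
       (auto intro!: continuous_intros simp: \<open>x \<in> X\<close>)
  have "((\<lambda>s. integral (cbox (min a b) (max a b)) (f s)) has_real_derivative
          integral (cbox (min a b) (max a b)) (fx x)) (at x within X)"
    using assms by (intro leibniz_rule_field_derivative) (auto intro: integrable_continuous_interval)
  then have "((\<lambda>s. \<sigma> * integral {min a b..max a b} (f s)) has_real_derivative
          \<sigma> * integral {min a b..max a b} (fx x)) (at x within X)"
    by (intro DERIV_cmult) simp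
  then show ?thesis
    unfolding LBINT_eq[OF cont_fx_x]
  proof (rule has_field_derivative_transform_within[OF _ zero_less_one \<open>x \<in> X\<close>])
    show "\<sigma> * integral {min a b..max a b} (f s) = (LBINT t=a..b. f s t)" if "s \<in> X" for s
      using LBINT_eq[OF cont_f[OF that]] by simp
  qed
qed

lemma continuous_on_slices:
  fixes D :: "(real \<times> real) set"
  assumes "continuous_on D f"
  shows "continuous_on ((\<lambda>s. (s, t)) -` D) (\<lambda>s. f (s, t))" "continuous_on (Pair s -` D) (\<lambda>t. f (s, t))"
  by (rule continuous_on_compose2[OF assms]; auto intro!: continuous_intros)+

lemma open_slices:
  fixes D :: "(real \<times> real) set"
  assumes "open D"
  shows "open ((\<lambda>s. (s, t)) -` D)" "open (Pair s -` D)"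
  by (intro continuous_open_vimage[OF assms] continuous_intros)+

lemma open_contains_vertical_tube:
  fixes D :: "(real \<times> real) set"
  assumes "open D" "\<And>t. t \<in> closed_segment c d \<Longrightarrow> (x, t) \<in> D"
  shows "\<exists>e>0. \<forall>s\<in>ball x e. \<forall>t\<in>closed_segment c d. (s, t) \<in> D"
proof -
  have "compact ((\<lambda>t. (x, t)) ` closed_segment c d)"
    by (rule compact_continuous_image[OF _ compact_segment]) (intro continuous_intros)
  moreover have "(\<lambda>t. (x, t)) ` closed_segment c d \<subseteq> D"
    using assms(2) by auto
  ultimately obtain e where "e > 0" and e: "(\<Union>z\<in>(\<lambda>t. (x, t)) ` closed_segment c d. ball z e) \<subseteq> D"
    using compact_subset_open_imp_ball_epsilon_subset[OF _ \<open>open D\<close>] by metis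
  have "(s, t) \<in> D" if "s \<in> ball x e" "t \<in> closed_segment c d" for s t
  proof (rule subsetD[OF e UN_I[of "(x, t)"]])
    show "(s, t) \<in> ball (x, t) e"
      using that by (simp add: dist_Pair_Pair dist_commute)
  qed (use that in auto)
  with \<open>e > 0\<close> show ?thesis
    by blast
qed

section \<open>Exact forms on simply connected planar domains\<close>

definition primitive_on ::
    "(real \<times> real) set \<Rightarrow> (real \<times> real \<Rightarrow> real) \<Rightarrow> (real \<times> real \<Rightarrow> real) \<Rightarrow> (real \<times> real \<Rightarrow> real) \<Rightarrow> bool"
  where "primitive_on D U P Q \<longleftrightarrow> (\<forall>w\<in>D. (U has_derivative (\<lambda>h. P w * fst h + Q w * snd h)) (at w))"

definition exact_on :: "(real \<times> real) set \<Rightarrow> (real \<times> real \<Rightarrow> real) \<Rightarrow> (real \<times> real \<Rightarrow> real) \<Rightarrow> bool"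
  where "exact_on D P Q \<longleftrightarrow> (\<exists>U. primitive_on D U P Q)"

text \<open>The integral of \<open>P dx + Q dy\<close> along the path \<open>(x0, y0) \<rightarrow> (s, y0) \<rightarrow> (s, t)\<close>; since \<open>LBINT\<close>
  is oriented, no assumption on the position of \<open>(s, t)\<close> relative to \<open>(x0, y0)\<close> is needed.\<close>
definition L_integral :: "real \<Rightarrow> real \<Rightarrow> (real \<times> real \<Rightarrow> real) \<Rightarrow> (real \<times> real \<Rightarrow> real) \<Rightarrow> real \<Rightarrow> real \<Rightarrow> real"
  where "L_integral x0 y0 P Q s t = (LBINT \<sigma>=x0..s. P (\<sigma>, y0)) + (LBINT \<tau>=y0..t. Q (s, \<tau>))"

context
  fixes D :: "(real \<times> real) set" and x0 y0 :: real and P Q :: "real \<times> real \<Rightarrow> real"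
  assumes "open D"
    and L_paths: "\<And>x y. (x, y) \<in> D \<Longrightarrow>
              (\<forall>s\<in>closed_segment x0 x. (s, y0) \<in> D) \<and> (\<forall>t\<in>closed_segment y0 y. (x, t) \<in> D)"
    and dP: "\<And>w. w \<in> D \<Longrightarrow> P differentiable (at w)"
    and dQ: "\<And>w. w \<in> D \<Longrightarrow> Q differentiable (at w)"
    and cQx: "continuous_on D (pd10 Q)"
    and closed: "\<And>w. w \<in> D \<Longrightarrow> pd01 P w = pd10 Q w"
begin

lemma L_integral_partial_y:
  assumes "(x, y) \<in> D"
  shows "((\<lambda>t. L_integral x0 y0 P Q x t) has_real_derivative Q (x, y)) (at y)"
proof -
  have cQ: "continuous_on D Q"
    by (intro differentiable_imp_continuous_on differentiable_at_imp_differentiable_on dQ)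
  have "((\<lambda>t. LBINT \<tau>=y0..t. Q (x, \<tau>)) has_real_derivative Q (x, y)) (at y)"
    using L_paths[OF assms] continuous_on_slices(2)[OF cQ]
    by (intro interval_integral_has_real_derivative_open[OF open_slices(2)[OF \<open>open D\<close>]]) auto
  from DERIV_add[OF DERIV_const this] show ?thesis
    unfolding L_integral_def by simp
qed

lemma integral_pd10_vertical:
  assumes "(x, y) \<in> D"
  shows "(LBINT \<tau>=y0..y. pd10 Q (x, \<tau>)) = P (x, y) - P (x, y0)"
proof (rule interval_integral_FTC_finite)
  have seg: "{min y0 y..max y0 y} \<subseteq> Pair x -` D"
    using L_paths[OF assms] by (auto simp: closed_segment_eq_real_ivl min_def max_def split: if_splits)
  then show "continuous_on {min y0 y..max y0 y} (\<lambda>\<tau>. pd10 Q (x, \<tau>))"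
    by (rule continuous_on_subset[OF continuous_on_slices(2)[OF cQx], rotated])
  show "((\<lambda>\<tau>. P (x, \<tau>)) has_vector_derivative pd10 Q (x, \<tau>)) (at \<tau> within {min y0 y..max y0 y})"
    if "min y0 y \<le> \<tau>" "\<tau> \<le> max y0 y" for \<tau>
  proof -
    have "(x, \<tau>) \<in> D"
      using seg that by auto
    then have "((\<lambda>\<tau>. P (x, \<tau>)) has_real_derivative pd10 Q (x, \<tau>)) (at \<tau>)"
      using pd01_deriv[OF dP] closed by metis
    then show ?thesis
      by (simp add: has_real_derivative_iff_has_vector_derivative has_vector_derivative_at_within)
  qed
qed

lemma L_integral_partial_x:
  assumes "(x, y) \<in> D"
  shows "((\<lambda>s. L_integral x0 y0 P Q s y) has_real_derivative P (x, y)) (at x)"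
proof -
  have cP: "continuous_on D P"
    by (intro differentiable_imp_continuous_on differentiable_at_imp_differentiable_on dP)
  have cQ: "continuous_on D Q"
    by (intro differentiable_imp_continuous_on differentiable_at_imp_differentiable_on dQ)
  have "\<And>t. t \<in> closed_segment y0 y \<Longrightarrow> (x, t) \<in> D"
    using L_paths[OF assms] by blast
  then obtain e where "e > 0" and tube: "\<forall>s\<in>ball x e. \<forall>t\<in>closed_segment y0 y. (s, t) \<in> D"
    using open_contains_vertical_tube[OF \<open>open D\<close>] by blast
  define X where "X = ball x e"
  have X: "x \<in> X" "open X" "convex X"
    using \<open>e > 0\<close> by (simp_all add: X_def)
  have seg: "{min y0 y..max y0 y} = closed_segment y0 y"
    by (simp add: closed_segment_eq_real_ivl min_def max_def)
  have XD: "X \<times> {min y0 y..max y0 y} \<subseteq> D"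
    using tube by (auto simp: X_def seg)
  have dH: "((\<lambda>s. LBINT \<sigma>=x0..s. P (\<sigma>, y0)) has_real_derivative P (x, y0)) (at x)"
  proof (rule interval_integral_has_real_derivative_open[OF open_slices(1)[OF \<open>open D\<close>]])
    show "closed_segment x0 x \<subseteq> (\<lambda>s. (s, y0)) -` D"
      using L_paths[OF assms] by blast
  qed (rule continuous_on_slices(1)[OF cP])
  have dV: "((\<lambda>s. LBINT \<tau>=y0..y. Q (s, \<tau>)) has_real_derivative (LBINT \<tau>=y0..y. pd10 Q (x, \<tau>))) (at x within X)"
  proof (rule interval_integral_leibniz[OF _ _ _ X(1,3)])
    show "((\<lambda>s. Q (s, t)) has_real_derivative pd10 Q (s, t)) (at s within X)"
      if "s \<in> X" "t \<in> {min y0 y..max y0 y}" for s t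
      using XD that by (intro has_field_derivative_at_within[OF pd10_deriv] dQ) blast
    show "continuous_on {min y0 y..max y0 y} (\<lambda>t. Q (s, t))" if "s \<in> X" for s
      by (rule continuous_on_subset[OF continuous_on_slices(2)[OF cQ]]) (use XD that in blast)
    show "continuous_on (X \<times> {min y0 y..max y0 y}) (\<lambda>(s, t). pd10 Q (s, t))"
      using continuous_on_subset[OF cQx XD] by simp
  qed
  have "((\<lambda>s. L_integral x0 y0 P Q s y) has_real_derivative P (x, y)) (at x within X)"
    using DERIV_add[OF has_field_derivative_at_within[OF dH] dV] integral_pd10_vertical[OF assms]
    unfolding L_integral_def by simp
  then show ?thesis
    unfolding at_within_open[OF X(1,2)] .
qed

lemma exact_on_L_starlike: "exact_on D P Q"
proof -
  have "((\<lambda>(s, t). L_integral x0 y0 P Q s t) has_derivative (\<lambda>h. P w * fst h + Q w * snd h)) (at w)"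
    if "w \<in> D" for w
  proof -
    obtain x y where w: "w = (x, y)" by fastforce
    obtain X Y where "open X" "open Y" "w \<in> X \<times> Y" and XY: "X \<times> Y \<subseteq> D"
      by (rule open_prod_elim[OF \<open>open D\<close> \<open>w \<in> D\<close>])
    then have "x \<in> X" "y \<in> Y"
      by (simp_all add: w)
    obtain e where "e > 0" and "ball y e \<subseteq> Y"
      by (rule openE[OF \<open>open Y\<close> \<open>y \<in> Y\<close>])
    with XY have box: "(s, t) \<in> D" if "s \<in> X" "t \<in> ball y e" for s t
      using that by blast
    have fx: "((\<lambda>s. L_integral x0 y0 P Q s y) has_derivative (\<lambda>h. h * P (x, y))) (at x within X)"
      using L_integral_partial_x \<open>w \<in> D\<close> w
      by (simp add: has_field_derivative_def mult_commute_abs has_derivative_at_withinI)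
    have fy: "((\<lambda>t. L_integral x0 y0 P Q s t) has_derivative blinfun_apply (blinfun_mult_left (Q (s, t))))
        (at t within ball y e)" if "s \<in> X" "t \<in> ball y e" for s t
      using L_integral_partial_y[OF box[OF that]]
      by (simp add: has_field_derivative_def mult_commute_abs has_derivative_at_withinI)
    have "isCont Q (x, y)"
      using differentiable_imp_continuous_within[OF dQ[OF \<open>w \<in> D\<close>]] w by simp
    then have "isCont (\<lambda>p. blinfun_mult_left (Q p)) (x, y)"
      by (rule bounded_linear.continuous[OF bounded_linear_blinfun_mult_left])
    then have "continuous (at (x, y) within X \<times> ball y e) (\<lambda>(s, t). blinfun_mult_left (Q (s, t)))"
      by (simp add: continuous_at_imp_continuous_within case_prod_beta')
    from has_derivative_partialsI[OF fx fy this] \<open>e > 0\<close>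
    have "((\<lambda>(s, t). L_integral x0 y0 P Q s t) has_derivative (\<lambda>(h, k). h * P (x, y) + k * Q (x, y)))
        (at (x, y) within X \<times> ball y e)"
      by simp
    moreover have "at (x, y) within X \<times> ball y e = at (x, y)"
      using \<open>e > 0\<close> \<open>x \<in> X\<close> \<open>open X\<close> by (intro at_within_open) (auto intro: open_Times)
    moreover have "(\<lambda>(h, k). h * P (x, y) + k * Q (x, y)) = (\<lambda>h. P w * fst h + Q w * snd h)"
      by (auto simp: w)
    ultimately show ?thesis
      by (simp add: w)
  qed
  then show ?thesis
    unfolding exact_on_def primitive_on_def by (intro exI[of _ "\<lambda>(s, t). L_integral x0 y0 P Q s t"]) blast
qed

end

lemma exact_on_ball:
  assumes "\<And>w. w \<in> ball z r \<Longrightarrow> P differentiable (at w)"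
    and "\<And>w. w \<in> ball z r \<Longrightarrow> Q differentiable (at w)"
    and "continuous_on (ball z r) (pd10 Q)"
    and "\<And>w. w \<in> ball z r \<Longrightarrow> pd01 P w = pd10 Q w"
  shows "exact_on (ball z r) P Q"
proof -
  obtain x0 y0 where z: "z = (x0, y0)" by fastforce
  have "(\<forall>s\<in>closed_segment x0 x. (s, y0) \<in> ball z r) \<and> (\<forall>t\<in>closed_segment y0 y. (x, t) \<in> ball z r)"
    if "(x, y) \<in> ball z r" for x y
  proof (intro conjI ballI)
    fix s assume "s \<in> closed_segment x0 x"
    then have "dist x0 s \<le> dist x0 x"
      using dist_in_closed_segment by (metis dist_commute)
    moreover have "sqrt ((dist x0 x)\<^sup>2 + (dist y0 y)\<^sup>2) < r"
      using that by (simp add: z dist_Pair_Pair)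
    ultimately have "dist x0 s < r"
      using real_sqrt_sum_squares_ge1[of "dist x0 x" "dist y0 y"] by linarith
    then show "(s, y0) \<in> ball z r"
      by (simp add: z dist_Pair_Pair)
  next
    fix t assume "t \<in> closed_segment y0 y"
    then have "dist y0 t \<le> dist y0 y"
      using dist_in_closed_segment by (metis dist_commute)
    then have "sqrt ((dist x0 x)\<^sup>2 + (dist y0 t)\<^sup>2) \<le> sqrt ((dist x0 x)\<^sup>2 + (dist y0 y)\<^sup>2)"
      by (simp add: power_mono)
    moreover have "sqrt ((dist x0 x)\<^sup>2 + (dist y0 y)\<^sup>2) < r"
      using that by (simp add: z dist_Pair_Pair)
    ultimately have "sqrt ((dist x0 x)\<^sup>2 + (dist y0 t)\<^sup>2) < r"
      by linarith
    then show "(x, t) \<in> ball z r"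
      by (simp add: z dist_Pair_Pair)
  qed
  then show ?thesis
    using assms by (intro exact_on_L_starlike) auto
qed

lemma exact_on_UNIV:
  assumes "\<And>w. P differentiable (at w)" and "\<And>w. Q differentiable (at w)"
    and "continuous_on UNIV (pd10 Q)" and "\<And>w. pd01 P w = pd10 Q w"
  shows "exact_on UNIV P Q"
  using assms by (intro exact_on_L_starlike) auto

definition complex_of_pair :: "real \<times> real \<Rightarrow> complex"
  where "complex_of_pair p = Complex (fst p) (snd p)"

definition pair_of_complex :: "complex \<Rightarrow> real \<times> real"
  where "pair_of_complex z = (Re z, Im z)"

lemma pair_of_complex_inverse [simp]: "complex_of_pair (pair_of_complex z) = z"
  and complex_of_pair_inverse [simp]: "pair_of_complex (complex_of_pair p) = p"
  by (simp_all add: complex_of_pair_def pair_of_complex_def)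

lemma complex_of_pair_eq: "complex_of_pair = (\<lambda>p. of_real (fst p) + \<i> * of_real (snd p))"
  by (simp add: fun_eq_iff complex_of_pair_def Complex_eq)

lemma has_derivative_complex_of_pair: "(complex_of_pair has_derivative complex_of_pair) F"
  unfolding complex_of_pair_eq by (auto intro!: derivative_eq_intros)

lemma continuous_on_complex_of_pair: "continuous_on A complex_of_pair"
  and continuous_on_pair_of_complex: "continuous_on B pair_of_complex"
  unfolding complex_of_pair_eq pair_of_complex_def[abs_def] by (auto intro!: continuous_intros)

lemma homeomorphism_complex_of_pair:
  "homeomorphism D (complex_of_pair ` D) complex_of_pair pair_of_complex"
  by (auto simp: homeomorphism_def continuous_on_complex_of_pair continuous_on_pair_of_complex image_iff)

lemma image_complex_of_pair: "complex_of_pair ` D = pair_of_complex -` D"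
  by (auto simp: image_iff) (metis pair_of_complex_inverse)

lemma image_pair_of_complex_ball: "pair_of_complex ` ball z r = ball (pair_of_complex z) r"
proof -
  have dist: "dist (pair_of_complex a) (pair_of_complex b) = dist a b" for a b
    unfolding pair_of_complex_def dist_Pair_Pair by (simp add: dist_norm cmod_def)
  show ?thesis
    by (auto simp: image_iff dist) (metis complex_of_pair_inverse dist mem_ball)
qed

lemma has_derivative_complex_coordinates:
  assumes "(h has_field_derivative a) (at (complex_of_pair p))"
  shows "((\<lambda>q. Re (h (complex_of_pair q))) has_derivative (\<lambda>k. Re a * fst k - Im a * snd k)) (at p)"
    and "((\<lambda>q. Im (h (complex_of_pair q))) has_derivative (\<lambda>k. Im a * fst k + Re a * snd k)) (at p)"
proof -
  have "((\<lambda>q. h (complex_of_pair q)) has_derivative (\<lambda>k. a * complex_of_pair k)) (at p)"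
    using has_derivative_compose[OF has_derivative_complex_of_pair assms[unfolded has_field_derivative_def]]
    by simp
  from has_derivative_Re[OF this] has_derivative_Im[OF this] show
    "((\<lambda>q. Re (h (complex_of_pair q))) has_derivative (\<lambda>k. Re a * fst k - Im a * snd k)) (at p)"
    "((\<lambda>q. Im (h (complex_of_pair q))) has_derivative (\<lambda>k. Im a * fst k + Re a * snd k)) (at p)"
    by (simp_all add: complex_of_pair_def add.commute)
qed

text \<open>The coefficients of the pull-back of \<open>P dx + Q dy\<close> along a holomorphic map \<open>g\<close>, in real
  coordinates: the real differential of \<open>g\<close> is multiplication by \<open>deriv g\<close>.\<close>
definition pullback_P :: "(complex \<Rightarrow> complex) \<Rightarrow> (real \<times> real \<Rightarrow> real) \<Rightarrow> (real \<times> real \<Rightarrow> real) \<Rightarrow> real \<times> real \<Rightarrow> real"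
  where "pullback_P g P Q p =
    P (pair_of_complex (g (complex_of_pair p))) * Re (deriv g (complex_of_pair p))
    + Q (pair_of_complex (g (complex_of_pair p))) * Im (deriv g (complex_of_pair p))"

definition pullback_Q :: "(complex \<Rightarrow> complex) \<Rightarrow> (real \<times> real \<Rightarrow> real) \<Rightarrow> (real \<times> real \<Rightarrow> real) \<Rightarrow> real \<times> real \<Rightarrow> real"
  where "pullback_Q g P Q p =
    Q (pair_of_complex (g (complex_of_pair p))) * Re (deriv g (complex_of_pair p))
    - P (pair_of_complex (g (complex_of_pair p))) * Im (deriv g (complex_of_pair p))"

lemma pullback_partials:
  assumes "open T" "g holomorphic_on T" "z \<in> T"
    and "P differentiable (at (pair_of_complex (g z)))" "Q differentiable (at (pair_of_complex (g z)))"
  defines "w \<equiv> pair_of_complex (g z)" and "c \<equiv> deriv g z" and "d \<equiv> deriv (deriv g) z"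
  shows "pullback_P g P Q differentiable (at (pair_of_complex z))"
    and "pullback_Q g P Q differentiable (at (pair_of_complex z))"
    and "pd01 (pullback_P g P Q) (pair_of_complex z) =
           (pd01 P w * Re c - pd10 P w * Im c) * Re c - P w * Im d
         + (pd01 Q w * Re c - pd10 Q w * Im c) * Im c + Q w * Re d"
    and "pd10 (pullback_Q g P Q) (pair_of_complex z) =
           (pd10 Q w * Re c + pd01 Q w * Im c) * Re c + Q w * Re d
         - (pd10 P w * Re c + pd01 P w * Im c) * Im c - P w * Im d"
proof -
  let ?p = "pair_of_complex z"
  have z: "complex_of_pair ?p = z"
    by simp
  have "(g has_field_derivative c) (at (complex_of_pair ?p))"
    unfolding z c_def by (rule holomorphic_derivI[OF assms(2,1,3)])
  note dg = has_derivative_complex_coordinates[OF this]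
  have "(deriv g has_field_derivative d) (at (complex_of_pair ?p))"
    unfolding z d_def by (rule holomorphic_derivI[OF holomorphic_deriv[OF assms(2,1)] assms(1,3)])
  note dc = has_derivative_complex_coordinates[OF this]
  have dG: "((\<lambda>q. pair_of_complex (g (complex_of_pair q))) has_derivative
      (\<lambda>k. (Re c * fst k - Im c * snd k, Im c * fst k + Re c * snd k))) (at ?p)"
    using has_derivative_Pair[OF dg] by (simp add: pair_of_complex_def)
  have dPG: "((\<lambda>q. P (pair_of_complex (g (complex_of_pair q)))) has_derivative
      (\<lambda>k. pd10 P w * (Re c * fst k - Im c * snd k) + pd01 P w * (Im c * fst k + Re c * snd k))) (at ?p)"
    and dQG: "((\<lambda>q. Q (pair_of_complex (g (complex_of_pair q)))) has_derivative
      (\<lambda>k. pd10 Q w * (Re c * fst k - Im c * snd k) + pd01 Q w * (Im c * fst k + Re c * snd k))) (at ?p)"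
    using has_derivative_compose[OF dG, of P "\<lambda>h. pd10 P w * fst h + pd01 P w * snd h"]
      has_derivative_compose[OF dG, of Q "\<lambda>h. pd10 Q w * fst h + pd01 Q w * snd h"]
      pd_has_derivative[OF assms(4)] pd_has_derivative[OF assms(5)]
    by (simp_all add: w_def)
  note dP' = has_derivative_add[OF has_derivative_mult[OF dPG dc(1)] has_derivative_mult[OF dQG dc(2)]]
  note dQ' = has_derivative_diff[OF has_derivative_mult[OF dQG dc(1)] has_derivative_mult[OF dPG dc(2)]]
  show "pullback_P g P Q differentiable (at ?p)" "pullback_Q g P Q differentiable (at ?p)"
    unfolding pullback_P_def[abs_def] pullback_Q_def[abs_def] using dP' dQ' by (auto intro: differentiableI)
  show "pd01 (pullback_P g P Q) ?p =
           (pd01 P w * Re c - pd10 P w * Im c) * Re c - P w * Im d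
         + (pd01 Q w * Re c - pd10 Q w * Im c) * Im c + Q w * Re d"
    unfolding pullback_P_def[abs_def] pd01_eq[OF dP'] by (simp add: z c_def w_def algebra_simps)
  show "pd10 (pullback_Q g P Q) ?p =
           (pd10 Q w * Re c + pd01 Q w * Im c) * Re c + Q w * Re d
         - (pd10 P w * Re c + pd01 P w * Im c) * Im c - P w * Im d"
    unfolding pullback_Q_def[abs_def] pd10_eq[OF dQ'] by (simp add: z c_def w_def algebra_simps)
qed

lemma pullback_closed_form:
  assumes "open T" "g holomorphic_on T" and gT: "\<And>z. z \<in> T \<Longrightarrow> pair_of_complex (g z) \<in> D"
    and P: "Ck_on (Suc 0) D P" and Q: "Ck_on (Suc 0) D Q"
    and closed: "\<And>w. w \<in> D \<Longrightarrow> pd01 P w = pd10 Q w"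
  shows "\<And>p. p \<in> pair_of_complex ` T \<Longrightarrow> pullback_P g P Q differentiable (at p)"
    and "\<And>p. p \<in> pair_of_complex ` T \<Longrightarrow> pullback_Q g P Q differentiable (at p)"
    and "continuous_on (pair_of_complex ` T) (pd10 (pullback_Q g P Q))"
    and "\<And>p. p \<in> pair_of_complex ` T \<Longrightarrow> pd01 (pullback_P g P Q) p = pd10 (pullback_Q g P Q) p"
proof -
  have dP: "\<And>w. w \<in> D \<Longrightarrow> P differentiable (at w)" and dQ: "\<And>w. w \<in> D \<Longrightarrow> Q differentiable (at w)"
    and cP': "continuous_on D (pd10 P)" "continuous_on D (pd01 P)"
    and cQ': "continuous_on D (pd10 Q)" "continuous_on D (pd01 Q)"
    using P Q by auto
  note partials = pullback_partials[OF assms(1,2) _ dP[OF gT] dQ[OF gT]]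
  show "pullback_P g P Q differentiable (at p)" "pullback_Q g P Q differentiable (at p)"
    if "p \<in> pair_of_complex ` T" for p
    using that partials(1,2) by auto
  \<comment> \<open>the defect of closedness is multiplied by \<open>|deriv g|\<^sup>2\<close>, since \<open>g\<close> is conformal\<close>
  show "pd01 (pullback_P g P Q) p = pd10 (pullback_Q g P Q) p" if "p \<in> pair_of_complex ` T" for p
    using that closed[OF gT] by (auto simp: partials(3,4) algebra_simps)
  define G where "G q = pair_of_complex (g (complex_of_pair q))" for q
  define c where "c q = deriv g (complex_of_pair q)" for q
  define d where "d q = deriv (deriv g) (complex_of_pair q)" for q
  have cpT: "complex_of_pair ` pair_of_complex ` T \<subseteq> T"
    by auto
  have "continuous_on (pair_of_complex ` T) G"
    unfolding G_def
    by (intro continuous_on_compose2[OF continuous_on_pair_of_complex]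
        continuous_on_compose2[OF holomorphic_on_imp_continuous_on[OF assms(2)] continuous_on_complex_of_pair cpT])
       auto
  then have cG: "continuous_on (pair_of_complex ` T) (\<lambda>q. h (G q))" if "continuous_on D h" for h
    by (rule continuous_on_compose2[OF that]) (auto simp: G_def gT)
  have "continuous_on (pair_of_complex ` T) c" "continuous_on (pair_of_complex ` T) d"
    unfolding c_def d_def using assms(1,2)
    by (auto intro!: continuous_on_compose2[OF holomorphic_on_imp_continuous_on continuous_on_complex_of_pair cpT]
        holomorphic_deriv)
  then have "continuous_on (pair_of_complex ` T) (\<lambda>q.
      (pd10 Q (G q) * Re (c q) + pd01 Q (G q) * Im (c q)) * Re (c q) + Q (G q) * Re (d q)
      - (pd10 P (G q) * Re (c q) + pd01 P (G q) * Im (c q)) * Im (c q) - P (G q) * Im (d q))"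
    using cP' cQ' Ck_on_Suc_imp_Ck_on[OF P] Ck_on_Suc_imp_Ck_on[OF Q]
    by (auto intro!: continuous_intros cG)
  then show "continuous_on (pair_of_complex ` T) (pd10 (pullback_Q g P Q))"
    by (rule continuous_on_cong[THEN iffD1, OF refl, rotated]) (auto simp: partials(4) G_def c_def d_def)
qed

lemma deriv_left_inverse:
  assumes "open S" "f holomorphic_on S" "open T" "g holomorphic_on T"
    and fg: "\<And>z. z \<in> S \<Longrightarrow> f z \<in> T \<and> g (f z) = z" and "z \<in> S"
  shows "deriv g (f z) * deriv f z = 1"
proof -
  have "((\<lambda>x. g (f x)) has_field_derivative deriv g (f z) * deriv f z) (at z)"
    using DERIV_chain[OF holomorphic_derivI[OF assms(4,3)] holomorphic_derivI[OF assms(2,1,6)]] fg[OF \<open>z \<in> S\<close>]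
    by (simp add: o_def)
  moreover have "((\<lambda>x. g (f x)) has_field_derivative 1) (at z)"
    by (rule has_field_derivative_transform_within_open[OF DERIV_ident assms(1,6)]) (use fg in auto)
  ultimately show ?thesis
    by (rule DERIV_unique)
qed

lemma exact_on_pushforward:
  assumes "open S" "f holomorphic_on S" "open T" "g holomorphic_on T"
    and fg: "\<And>z. z \<in> S \<Longrightarrow> f z \<in> T \<and> g (f z) = z"
    and "exact_on (pair_of_complex ` T) (pullback_P g P Q) (pullback_Q g P Q)"
  shows "exact_on (pair_of_complex ` S) P Q"
proof -
  obtain U where U: "\<And>w. w \<in> pair_of_complex ` T \<Longrightarrow>
      (U has_derivative (\<lambda>h. pullback_P g P Q w * fst h + pullback_Q g P Q w * snd h)) (at w)"
    using assms(6) unfolding exact_on_def primitive_on_def by blast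
  have "((\<lambda>p. U (pair_of_complex (f (complex_of_pair p)))) has_derivative (\<lambda>h. P p * fst h + Q p * snd h)) (at p)"
    if "p \<in> pair_of_complex ` S" for p
  proof -
    define z where "z = complex_of_pair p"
    define e where "e = deriv f z"
    define c where "c = deriv g (f z)"
    have "z \<in> S" and p: "p = pair_of_complex z"
      using that by (auto simp: z_def)
    have ce: "Re c * Re e - Im c * Im e = 1" "Re c * Im e + Im c * Re e = 0"
      using deriv_left_inverse[OF assms(1-5) \<open>z \<in> S\<close>, folded c_def e_def]
      by (metis one_complex.sel times_complex.sel)+
    have "(f has_field_derivative e) (at (complex_of_pair p))"
      unfolding e_def z_def[symmetric] by (rule holomorphic_derivI[OF assms(2,1) \<open>z \<in> S\<close>])
    from has_derivative_complex_coordinates[OF this]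
    have dF: "((\<lambda>q. pair_of_complex (f (complex_of_pair q))) has_derivative
        (\<lambda>k. (Re e * fst k - Im e * snd k, Im e * fst k + Re e * snd k))) (at p)"
      using has_derivative_Pair by (fastforce simp: pair_of_complex_def)
    have "pair_of_complex (f (complex_of_pair p)) \<in> pair_of_complex ` T"
      using fg[OF \<open>z \<in> S\<close>] by (simp add: z_def)
    from has_derivative_compose[OF dF U[OF this]]
    have "((\<lambda>q. U (pair_of_complex (f (complex_of_pair q)))) has_derivative
        (\<lambda>k. (P p * Re c + Q p * Im c) * (Re e * fst k - Im e * snd k)
           + (Q p * Re c - P p * Im c) * (Im e * fst k + Re e * snd k))) (at p)"
      using fg[OF \<open>z \<in> S\<close>] by (simp add: pullback_P_def pullback_Q_def c_def p)
    moreover have "(P p * Re c + Q p * Im c) * (Re e * fst k - Im e * snd k)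
           + (Q p * Re c - P p * Im c) * (Im e * fst k + Re e * snd k) = P p * fst k + Q p * snd k" for k
    proof -
      have "(P p * Re c + Q p * Im c) * (Re e * fst k - Im e * snd k)
           + (Q p * Re c - P p * Im c) * (Im e * fst k + Re e * snd k)
          = (P p * fst k + Q p * snd k) * (Re c * Re e - Im c * Im e)
           + (Q p * fst k - P p * snd k) * (Re c * Im e + Im c * Re e)"
        by algebra
      then show ?thesis
        by (simp add: ce)
    qed
    ultimately show ?thesis
      by simp
  qed
  then show ?thesis
    unfolding exact_on_def primitive_on_def by blast
qed

lemma exact_on_biholomorphic_to_disc:
  assumes "open S" "f holomorphic_on S" "g holomorphic_on ball 0 1"
    and fg: "\<And>z. z \<in> S \<Longrightarrow> f z \<in> ball 0 1 \<and> g (f z) = z" and gS: "\<And>z. z \<in> ball 0 1 \<Longrightarrow> g z \<in> S"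
    and P: "Ck_on (Suc 0) (pair_of_complex ` S) P" and Q: "Ck_on (Suc 0) (pair_of_complex ` S) Q"
    and closed: "\<And>w. w \<in> pair_of_complex ` S \<Longrightarrow> pd01 P w = pd10 Q w"
  shows "exact_on (pair_of_complex ` S) P Q"
proof (rule exact_on_pushforward[OF assms(1,2) open_ball assms(3) fg])
  have "\<And>z. z \<in> ball 0 1 \<Longrightarrow> pair_of_complex (g z) \<in> pair_of_complex ` S"
    using gS by blast
  note pullback = pullback_closed_form[OF open_ball assms(3) this P Q closed]
  show "exact_on (pair_of_complex ` ball 0 1) (pullback_P g P Q) (pullback_Q g P Q)"
    unfolding image_pair_of_complex_ball
    using pullback[unfolded image_pair_of_complex_ball] by (intro exact_on_ball)
qed

theorem exact_on_simply_connected: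
  assumes "open D" "simply_connected D"
    and P: "Ck_on (Suc 0) D P" and Q: "Ck_on (Suc 0) D Q"
    and closed: "\<And>w. w \<in> D \<Longrightarrow> pd01 P w = pd10 Q w"
  shows "exact_on D P Q"
proof -
  define S where "S = complex_of_pair ` D"
  have D: "D = pair_of_complex ` S"
    by (auto simp: S_def image_image)
  have "open S"
    unfolding S_def image_complex_of_pair
    by (rule continuous_open_vimage[OF \<open>open D\<close>])
       (metis continuous_on_pair_of_complex continuous_on_eq_continuous_at open_UNIV UNIV_I)
  moreover have "simply_connected S"
    using \<open>simply_connected D\<close> homeomorphism_complex_of_pair homeomorphic_simply_connected_eq
    unfolding S_def homeomorphic_def by blast
  ultimately have "S = {} \<or> S = UNIV \<or>
      (\<exists>f g. f holomorphic_on S \<and> g holomorphic_on ball 0 1 \<and>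
           (\<forall>z \<in> S. f z \<in> ball 0 1 \<and> g (f z) = z) \<and> (\<forall>z \<in> ball 0 1. g z \<in> S \<and> f (g z) = z))"
    by (intro Riemann_mapping_theorem[THEN iffD1] conjI)
  then consider "D = {}" | "D = UNIV"
    | f g where "f holomorphic_on S" "g holomorphic_on ball 0 1"
        "\<And>z. z \<in> S \<Longrightarrow> f z \<in> ball 0 1 \<and> g (f z) = z" "\<And>z. z \<in> ball 0 1 \<Longrightarrow> g z \<in> S"
    by (auto simp: D surj_def) (metis complex_of_pair_inverse)
  then show ?thesis
  proof cases
    case 1
    then show ?thesis
      by (simp add: exact_on_def primitive_on_def)
  next
    case 2
    with P Q closed show ?thesis
      unfolding \<open>D = UNIV\<close> by (intro exact_on_UNIV) (simp_all add: split_paired_all)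
  next
    case 3
    with P Q closed \<open>open S\<close> show ?thesis
      unfolding D by (intro exact_on_biholomorphic_to_disc)
  qed
qed

section \<open>The Lagrangian flow\<close>

lemma phi1_second_derivative:
  "deriv (deriv (\<lambda>s. phi1 \<mu> \<theta> v1 v2 w1 w2 s a)) t
     = - (\<mu> * \<mu>) * (cos (\<mu> * t) * v1 a - sin (\<mu> * t) * v2 a) - \<theta> * \<theta> * (cos (\<theta> * t) * w1 a - sin (\<theta> * t) * w2 a)"
proof -
  have "deriv (\<lambda>s. phi1 \<mu> \<theta> v1 v2 w1 w2 s a)
      = (\<lambda>s. - \<mu> * sin (\<mu> * s) * v1 a - \<mu> * cos (\<mu> * s) * v2 a - \<theta> * sin (\<theta> * s) * w1 a - \<theta> * cos (\<theta> * s) * w2 a)"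
    by (rule ext, rule DERIV_imp_deriv) (auto simp: phi1_def intro!: derivative_eq_intros)
  then show ?thesis
    by (simp only:) (rule DERIV_imp_deriv, auto intro!: derivative_eq_intros simp: algebra_simps)
qed

lemma phi2_second_derivative:
  "deriv (deriv (\<lambda>s. phi2 \<mu> \<theta> v1 v2 w1 w2 s a)) t
     = - (\<mu> * \<mu>) * (sin (\<mu> * t) * v1 a + cos (\<mu> * t) * v2 a) - \<theta> * \<theta> * (sin (\<theta> * t) * w1 a + cos (\<theta> * t) * w2 a)"
proof -
  have "deriv (\<lambda>s. phi2 \<mu> \<theta> v1 v2 w1 w2 s a)
      = (\<lambda>s. \<mu> * cos (\<mu> * s) * v1 a - \<mu> * sin (\<mu> * s) * v2 a + \<theta> * cos (\<theta> * s) * w1 a - \<theta> * sin (\<theta> * s) * w2 a)"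
    by (rule ext, rule DERIV_imp_deriv) (auto simp: phi2_def intro!: derivative_eq_intros)
  then show ?thesis
    by (simp only:) (rule DERIV_imp_deriv, auto intro!: derivative_eq_intros simp: algebra_simps)
qed

lemma phi1_eq: "phi1 \<mu> \<theta> v1 v2 w1 w2 t
    = (\<lambda>a. cos (\<mu> * t) * v1 a - sin (\<mu> * t) * v2 a + cos (\<theta> * t) * w1 a - sin (\<theta> * t) * w2 a)"
  and phi2_eq: "phi2 \<mu> \<theta> v1 v2 w1 w2 t
    = (\<lambda>a. sin (\<mu> * t) * v1 a + cos (\<mu> * t) * v2 a + sin (\<theta> * t) * w1 a + cos (\<theta> * t) * w2 a)"
  by (simp_all add: fun_eq_iff phi1_def phi2_def)

text \<open>With \<open>R\<close> the rotation by \<open>(\<theta> - \<mu>) t\<close>, this is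
  \<open>\<mu>\<^sup>2 |v|\<^sup>2 / 2 + \<theta>\<^sup>2 |w|\<^sup>2 / 2 + \<theta>\<^sup>2 \<langle>v, R w\<rangle> - (\<theta>\<^sup>2 - \<mu>\<^sup>2) (cos G1 - sin G2)\<close>,
  where \<open>G1\<close> and \<open>G2\<close> are primitives of \<open>v\<^sup>1 dw\<^sup>1 + v\<^sup>2 dw\<^sup>2\<close> and \<open>v\<^sup>1 dw\<^sup>2 - v\<^sup>2 dw\<^sup>1\<close>: the last term
  turns the part of \<open>(d\<phi>)\<^sup>T \<phi>''\<close> that is not a gradient by itself into one.\<close>
definition pressure :: "real \<Rightarrow> real \<Rightarrow> (real \<times> real \<Rightarrow> real) \<Rightarrow> (real \<times> real \<Rightarrow> real)
    \<Rightarrow> (real \<times> real \<Rightarrow> real) \<Rightarrow> (real \<times> real \<Rightarrow> real) \<Rightarrow> (real \<times> real \<Rightarrow> real) \<Rightarrow> (real \<times> real \<Rightarrow> real)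
    \<Rightarrow> real \<Rightarrow> real \<times> real \<Rightarrow> real"
  where "pressure \<mu> \<theta> v1 v2 w1 w2 G1 G2 t a =
      \<mu> * \<mu> / 2 * (v1 a * v1 a + v2 a * v2 a) + \<theta> * \<theta> / 2 * (w1 a * w1 a + w2 a * w2 a)
    + \<theta> * \<theta> * (cos ((\<theta> - \<mu>) * t) * (v1 a * w1 a + v2 a * w2 a)
                 - sin ((\<theta> - \<mu>) * t) * (v1 a * w2 a - v2 a * w1 a))
    - (\<theta> * \<theta> - \<mu> * \<mu>) * (cos ((\<theta> - \<mu>) * t) * G1 a - sin ((\<theta> - \<mu>) * t) * G2 a)"

lemma cos_sin_diff_mult:
  fixes \<theta> \<mu> t :: real
  shows "cos ((\<theta> - \<mu>) * t) = cos (\<theta> * t) * cos (\<mu> * t) + sin (\<theta> * t) * sin (\<mu> * t)"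
    "sin ((\<theta> - \<mu>) * t) = sin (\<theta> * t) * cos (\<mu> * t) - cos (\<theta> * t) * sin (\<mu> * t)"
  by (simp_all add: left_diff_distrib cos_diff sin_diff)

context
  fixes D :: "(real \<times> real) set" and v1 v2 w1 w2 :: "real \<times> real \<Rightarrow> real"
  assumes smooth: "smooth_on D v1" "smooth_on D v2" "smooth_on D w1" "smooth_on D w2"
begin

lemma smooth_on_data: "f \<in> {v1, v2, w1, w2, pd10 w1, pd01 w1, pd10 w2, pd01 w2} \<Longrightarrow> smooth_on D f"
  using smooth smooth_on_pd[OF smooth(3)] smooth_on_pd[OF smooth(4)] by blast

lemma differentiable_data:
  "f \<in> {v1, v2, w1, w2, pd10 w1, pd01 w1, pd10 w2, pd01 w2} \<Longrightarrow> a \<in> D \<Longrightarrow> f differentiable (at a)"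
  using smooth_on_imp_Ck_on[OF smooth_on_data, of f "Suc 0"] by simp

lemma exact_on_v_dw:
  assumes "open D" "simply_connected D"
    and "\<forall>a\<in>D. pd10 w2 a * pd01 v2 a - pd01 w2 a * pd10 v2 a + pd10 w1 a * pd01 v1 a - pd01 w1 a * pd10 v1 a = 0"
  shows "exact_on D (\<lambda>a. v1 a * pd10 w1 a + v2 a * pd10 w2 a) (\<lambda>a. v1 a * pd01 w1 a + v2 a * pd01 w2 a)"
proof (rule exact_on_simply_connected[OF assms(1,2)])
  show "Ck_on (Suc 0) D (\<lambda>a. v1 a * pd10 w1 a + v2 a * pd10 w2 a)"
    "Ck_on (Suc 0) D (\<lambda>a. v1 a * pd01 w1 a + v2 a * pd01 w2 a)"
    by (intro Ck_on_Suc_0_add_diff_mult smooth_on_imp_Ck_on smooth_on_data; simp)+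
  show "pd01 (\<lambda>a. v1 a * pd10 w1 a + v2 a * pd10 w2 a) a = pd10 (\<lambda>a. v1 a * pd01 w1 a + v2 a * pd01 w2 a) a"
    if "a \<in> D" for a
    using assms(3)[rule_format, OF that] smooth_on_pd01_pd10_eq[OF assms(1) smooth(3) that]
      smooth_on_pd01_pd10_eq[OF assms(1) smooth(4) that] that
    by (simp add: pd_add pd_mult differentiable_data mult.commute)
qed

lemma exact_on_v_dw_rotated:
  assumes "open D" "simply_connected D"
    and "\<forall>a\<in>D. pd10 w1 a * pd01 v2 a - pd01 w1 a * pd10 v2 a - pd10 w2 a * pd01 v1 a + pd01 w2 a * pd10 v1 a = 0"
  shows "exact_on D (\<lambda>a. v1 a * pd10 w2 a - v2 a * pd10 w1 a) (\<lambda>a. v1 a * pd01 w2 a - v2 a * pd01 w1 a)"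
proof (rule exact_on_simply_connected[OF assms(1,2)])
  show "Ck_on (Suc 0) D (\<lambda>a. v1 a * pd10 w2 a - v2 a * pd10 w1 a)"
    "Ck_on (Suc 0) D (\<lambda>a. v1 a * pd01 w2 a - v2 a * pd01 w1 a)"
    by (intro Ck_on_Suc_0_add_diff_mult smooth_on_imp_Ck_on smooth_on_data; simp)+
  show "pd01 (\<lambda>a. v1 a * pd10 w2 a - v2 a * pd10 w1 a) a = pd10 (\<lambda>a. v1 a * pd01 w2 a - v2 a * pd01 w1 a) a"
    if "a \<in> D" for a
    using assms(3)[rule_format, OF that] smooth_on_pd01_pd10_eq[OF assms(1) smooth(3) that]
      smooth_on_pd01_pd10_eq[OF assms(1) smooth(4) that] that
    by (simp add: pd_diff pd_mult differentiable_data mult.commute)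
qed

lemma pd_phi:
  assumes "pd \<in> {pd10, pd01}" "a \<in> D"
  shows "pd (phi1 \<mu> \<theta> v1 v2 w1 w2 t) a
       = cos (\<mu> * t) * pd v1 a - sin (\<mu> * t) * pd v2 a + cos (\<theta> * t) * pd w1 a - sin (\<theta> * t) * pd w2 a"
    and "pd (phi2 \<mu> \<theta> v1 v2 w1 w2 t) a
       = sin (\<mu> * t) * pd v1 a + cos (\<mu> * t) * pd v2 a + sin (\<theta> * t) * pd w1 a + cos (\<theta> * t) * pd w2 a"
  using assms by (auto simp: phi1_eq phi2_eq pd_add pd_diff pd_mult differentiable_data)

lemma jdet_phi:
  assumes "a \<in> D"
    and "pd10 w1 a * pd01 v2 a - pd01 w1 a * pd10 v2 a - pd10 w2 a * pd01 v1 a + pd01 w2 a * pd10 v1 a = 0"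
    and "pd10 w2 a * pd01 v2 a - pd01 w2 a * pd10 v2 a + pd10 w1 a * pd01 v1 a - pd01 w1 a * pd10 v1 a = 0"
  shows "jdet (phi1 \<mu> \<theta> v1 v2 w1 w2 t) (phi2 \<mu> \<theta> v1 v2 w1 w2 t) a = jdet v1 v2 a + jdet w1 w2 a"
proof -
  have directions: "pd10 \<in> {pd10, pd01}" "pd01 \<in> {pd10, pd01}"
    by simp_all
  show ?thesis
    unfolding jdet_def pd_phi[OF directions(1) assms(1)] pd_phi[OF directions(2) assms(1)]
    using assms(2,3) sin_cos_squared_add3[of "\<mu> * t"] sin_cos_squared_add3[of "\<theta> * t"] by algebra
qed

context
  fixes G1 G2 :: "real \<times> real \<Rightarrow> real"
  assumes G1: "primitive_on D G1 (\<lambda>a. v1 a * pd10 w1 a + v2 a * pd10 w2 a) (\<lambda>a. v1 a * pd01 w1 a + v2 a * pd01 w2 a)"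
    and G2: "primitive_on D G2 (\<lambda>a. v1 a * pd10 w2 a - v2 a * pd10 w1 a) (\<lambda>a. v1 a * pd01 w2 a - v2 a * pd01 w1 a)"
begin

lemma differentiable_primitives: "a \<in> D \<Longrightarrow> G1 differentiable (at a)" "a \<in> D \<Longrightarrow> G2 differentiable (at a)"
  using G1 G2 by (auto simp: primitive_on_def intro: differentiableI)

lemma pd_primitives:
  assumes "pd \<in> {pd10, pd01}" "a \<in> D"
  shows "pd G1 a = v1 a * pd w1 a + v2 a * pd w2 a" "pd G2 a = v1 a * pd w2 a - v2 a * pd w1 a"
  using assms G1 G2 by (auto simp: primitive_on_def pd10_eq pd01_eq)

lemma pressure_differentiable:
  "a \<in> D \<Longrightarrow> pressure \<mu> \<theta> v1 v2 w1 w2 G1 G2 t differentiable (at a)"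
  unfolding pressure_def by (simp add: differentiable_data differentiable_primitives)

lemma pd_pressure:
  assumes "pd \<in> {pd10, pd01}" "a \<in> D"
  shows "pd (pressure \<mu> \<theta> v1 v2 w1 w2 G1 G2 t) a =
      \<mu> * \<mu> * (v1 a * pd v1 a + v2 a * pd v2 a) + \<theta> * \<theta> * (w1 a * pd w1 a + w2 a * pd w2 a)
    + \<theta> * \<theta> * (cos ((\<theta> - \<mu>) * t) * (pd v1 a * w1 a + v1 a * pd w1 a + pd v2 a * w2 a + v2 a * pd w2 a)
                 - sin ((\<theta> - \<mu>) * t) * (pd v1 a * w2 a + v1 a * pd w2 a - pd v2 a * w1 a - v2 a * pd w1 a))
    - (\<theta> * \<theta> - \<mu> * \<mu>) * (cos ((\<theta> - \<mu>) * t) * (v1 a * pd w1 a + v2 a * pd w2 a)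
                           - sin ((\<theta> - \<mu>) * t) * (v1 a * pd w2 a - v2 a * pd w1 a))"
  using assms unfolding pressure_def[abs_def]
  by (auto simp: pd_add pd_diff pd_mult pd_divide_const differentiable_data differentiable_primitives
      pd_primitives algebra_simps)

lemma euler_pressure:
  assumes "pd \<in> {pd10, pd01}" "a \<in> D"
  shows "pd (phi1 \<mu> \<theta> v1 v2 w1 w2 t) a * deriv (deriv (\<lambda>s. phi1 \<mu> \<theta> v1 v2 w1 w2 s a)) t
       + pd (phi2 \<mu> \<theta> v1 v2 w1 w2 t) a * deriv (deriv (\<lambda>s. phi2 \<mu> \<theta> v1 v2 w1 w2 s a)) t
       + pd (pressure \<mu> \<theta> v1 v2 w1 w2 G1 G2 t) a = 0"
  unfolding pd_phi[OF assms] pd_pressure[OF assms] phi1_second_derivative phi2_second_derivative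
  using sin_cos_squared_add3[of "\<mu> * t"] sin_cos_squared_add3[of "\<theta> * t"] cos_sin_diff_mult[of \<theta> \<mu> t]
  by algebra

end

end

theorem theorem5p1:
  fixes D :: "(real \<times> real) set"
    and \<mu> \<theta> :: real
    and v1 v2 w1 w2 :: "real \<times> real \<Rightarrow> real"
  assumes "open D" and "connected D" and "simply_connected D"
    and "\<mu> \<noteq> \<theta>"
    and "smooth_on D v1" and "smooth_on D v2" and "smooth_on D w1" and "smooth_on D w2"
    and "\<forall>a\<in>D. pd10 w1 a * pd01 v2 a - pd01 w1 a * pd10 v2 a
                - pd10 w2 a * pd01 v1 a + pd01 w2 a * pd10 v1 a = 0"
    and "\<forall>a\<in>D. pd10 w2 a * pd01 v2 a - pd01 w2 a * pd10 v2 a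
                + pd10 w1 a * pd01 v1 a - pd01 w1 a * pd10 v1 a = 0"
    and "\<forall>a\<in>D. jdet v1 v2 a + jdet w1 w2 a \<noteq> 0"
  shows "(\<forall>t. \<forall>a\<in>D.
            jdet (phi1 \<mu> \<theta> v1 v2 w1 w2 t) (phi2 \<mu> \<theta> v1 v2 w1 w2 t) a
              = jdet v1 v2 a + jdet w1 w2 a
            \<and> jdet (phi1 \<mu> \<theta> v1 v2 w1 w2 t) (phi2 \<mu> \<theta> v1 v2 w1 w2 t) a \<noteq> 0)
       \<and> (\<exists>p :: real \<Rightarrow> real \<times> real \<Rightarrow> real. \<forall>t. \<forall>a\<in>D.
            p t differentiable (at a)
            \<and> pd10 (phi1 \<mu> \<theta> v1 v2 w1 w2 t) a
                * deriv (deriv (\<lambda>s. phi1 \<mu> \<theta> v1 v2 w1 w2 s a)) t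
              + pd10 (phi2 \<mu> \<theta> v1 v2 w1 w2 t) a
                * deriv (deriv (\<lambda>s. phi2 \<mu> \<theta> v1 v2 w1 w2 s a)) t
              + pd10 (p t) a = 0
            \<and> pd01 (phi1 \<mu> \<theta> v1 v2 w1 w2 t) a
                * deriv (deriv (\<lambda>s. phi1 \<mu> \<theta> v1 v2 w1 w2 s a)) t
              + pd01 (phi2 \<mu> \<theta> v1 v2 w1 w2 t) a
                * deriv (deriv (\<lambda>s. phi2 \<mu> \<theta> v1 v2 w1 w2 s a)) t
              + pd01 (p t) a = 0)"
proof -
  obtain G1 where G1: "primitive_on D G1 (\<lambda>a. v1 a * pd10 w1 a + v2 a * pd10 w2 a) (\<lambda>a. v1 a * pd01 w1 a + v2 a * pd01 w2 a)"
    using exact_on_v_dw[OF assms(5-8,1,3,10)] unfolding exact_on_def by blast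
  obtain G2 where G2: "primitive_on D G2 (\<lambda>a. v1 a * pd10 w2 a - v2 a * pd10 w1 a) (\<lambda>a. v1 a * pd01 w2 a - v2 a * pd01 w1 a)"
    using exact_on_v_dw_rotated[OF assms(5-8,1,3,9)] unfolding exact_on_def by blast
  have directions: "pd10 \<in> {pd10, pd01}" "pd01 \<in> {pd10, pd01}"
    by simp_all
  show ?thesis
  proof (intro conjI allI ballI exI[of _ "pressure \<mu> \<theta> v1 v2 w1 w2 G1 G2"])
    fix t a assume "a \<in> D"
    show "jdet (phi1 \<mu> \<theta> v1 v2 w1 w2 t) (phi2 \<mu> \<theta> v1 v2 w1 w2 t) a = jdet v1 v2 a + jdet w1 w2 a"
      using jdet_phi[OF assms(5-8) \<open>a \<in> D\<close>] assms(9,10) \<open>a \<in> D\<close> by blast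
    with assms(11) \<open>a \<in> D\<close>
    show "jdet (phi1 \<mu> \<theta> v1 v2 w1 w2 t) (phi2 \<mu> \<theta> v1 v2 w1 w2 t) a \<noteq> 0"
      by simp
  qed (use pressure_differentiable[OF assms(5-8) G1 G2] euler_pressure[OF assms(5-8) G1 G2 directions(1)]
      euler_pressure[OF assms(5-8) G1 G2 directions(2)] in auto)
qed

end
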